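(* There exist $d\ge1$, $\mu\in\mathbb{R}^d$, a symmetric positive semidefinite $\Sigma\in\mathbb{R}^{d\times d}$, $c\in\mathbb{R}^d$ with $c_f>0$, $\alpha>0$ and $\delta\in(0,1/2)$ such that the problem $$\min_{e\in\mathbb{R}^d}\ \sum_f c_f|e_f|\quad\text{s.t.}\quad \alpha-\mu^\top e-\Phi^{-1}(\delta)\,\|\Sigma^{1/2}e\|_2\le0$$ has an optimal solution, and every optimal solution has at least two nonzero coordinates (i.e. the agent must invest effort into more than one feature).
   Context: $\Phi$ is the standard normal CDF. The constraint is equivalent to $\mathbb{P}_{Z\sim\mathcal{N}(\mu,\Sigma)}[Z^\top e\ge\alpha]\ge1-\delta$, where $Z$ represents the agent's Gaussian belief about the vector $\mathbb{C}h$ of total feature contributions under partially incomplete information; the objective is the weighted $\ell_1$ cost of effort. *)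

theory Defs
  imports "HOL-Probability.Probability"
begin

text \<open>Vectors in R^d are functions nat => real (only indices < d matter);
  d x d matrices are functions nat => nat => real (only indices < d matter).\<close>

definition Phi :: "real \<Rightarrow> real" where
  "Phi x = measure (density lborel std_normal_density) {..x}"

definition Phi_inv :: "real \<Rightarrow> real" where
  "Phi_inv p = (THE x. Phi x = p)"

definition mat_symmetric :: "nat \<Rightarrow> (nat \<Rightarrow> nat \<Rightarrow> real) \<Rightarrow> bool" where
  "mat_symmetric d A \<longleftrightarrow> (\<forall>i<d. \<forall>j<d. A i j = A j i)"

definition mat_psd :: "nat \<Rightarrow> (nat \<Rightarrow> nat \<Rightarrow> real) \<Rightarrow> bool" where
  "mat_psd d A \<longleftrightarrow> mat_symmetric d A \<and>
     (\<forall>x::nat \<Rightarrow> real. (\<Sum>i<d. \<Sum>j<d. x i * A i j * x j) \<ge> 0)"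

definition is_psd_sqrt :: "nat \<Rightarrow> (nat \<Rightarrow> nat \<Rightarrow> real) \<Rightarrow> (nat \<Rightarrow> nat \<Rightarrow> real) \<Rightarrow> bool" where
  "is_psd_sqrt d S Sig \<longleftrightarrow> mat_psd d S \<and>
     (\<forall>i<d. \<forall>j<d. (\<Sum>k<d. S i k * S k j) = Sig i j)"

definition mat_vec :: "nat \<Rightarrow> (nat \<Rightarrow> nat \<Rightarrow> real) \<Rightarrow> (nat \<Rightarrow> real) \<Rightarrow> nat \<Rightarrow> real" where
  "mat_vec d A x = (\<lambda>i. \<Sum>j<d. A i j * x j)"

definition norm2 :: "nat \<Rightarrow> (nat \<Rightarrow> real) \<Rightarrow> real" where
  "norm2 d x = sqrt (\<Sum>i<d. (x i)\<^sup>2)"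

definition dot :: "nat \<Rightarrow> (nat \<Rightarrow> real) \<Rightarrow> (nat \<Rightarrow> real) \<Rightarrow> real" where
  "dot d x y = (\<Sum>i<d. x i * y i)"

definition cost :: "nat \<Rightarrow> (nat \<Rightarrow> real) \<Rightarrow> (nat \<Rightarrow> real) \<Rightarrow> real" where
  "cost d c e = (\<Sum>f<d. c f * \<bar>e f\<bar>)"

definition feasible ::
  "nat \<Rightarrow> (nat \<Rightarrow> real) \<Rightarrow> (nat \<Rightarrow> nat \<Rightarrow> real) \<Rightarrow> real \<Rightarrow> real \<Rightarrow> (nat \<Rightarrow> real) \<Rightarrow> bool" where
  "feasible d mu S alpha delta e \<longleftrightarrow>
     alpha - dot d mu e - Phi_inv delta * norm2 d (mat_vec d S e) \<le> 0"

definition optimal ::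
  "nat \<Rightarrow> (nat \<Rightarrow> real) \<Rightarrow> (nat \<Rightarrow> nat \<Rightarrow> real) \<Rightarrow> (nat \<Rightarrow> real) \<Rightarrow> real \<Rightarrow> real \<Rightarrow> (nat \<Rightarrow> real) \<Rightarrow> bool" where
  "optimal d mu S c alpha delta e \<longleftrightarrow> feasible d mu S alpha delta e \<and>
     (\<forall>e'. feasible d mu S alpha delta e' \<longrightarrow> cost d c e \<le> cost d c e')"

end

theory Submission imports Defs begin

(* Take d = 2, mu = (1,1), Sigma = S = I, c = (1,1) and delta = Phi(-1), so that Phi_inv delta = -1
   and the constraint reads  alpha <= e0 + e1 - |e|.  A feasible e cannot have a zero coordinate,
   since then e0 + e1 - |e| <= 0.  Writing L = |e0| + |e1| >= e0 + e1 and using |e| >= L / sqrt 2,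
   feasibility forces (1 - 1/sqrt 2) L >= alpha, i.e. L >= (2 + sqrt 2) alpha, and the diagonal
   point e0 = e1 = (1 + sqrt 2 / 2) alpha attains this bound. *)

abbreviation std_normal :: "real measure" where
  "std_normal \<equiv> density lborel std_normal_density"

lemma real_distribution_std_normal: "real_distribution std_normal"
proof -
  interpret prob_space std_normal
    using prob_space_normal_density by simp
  show ?thesis by unfold_locales simp
qed

lemma Phi_eq_cdf: "Phi = cdf std_normal"
  by (simp add: fun_eq_iff Phi_def cdf_def)

lemma emeasure_std_normal_atMost_eq_atLeast:
  "emeasure std_normal {..a} = emeasure std_normal {-a..}"
proof -
  have "emeasure std_normal {..a} =
      (\<integral>\<^sup>+x. ennreal (std_normal_density x) * indicator {..a} x \<partial>lborel)"
    by (simp add: emeasure_density)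
  also have "\<dots> = ennreal \<bar>-1\<bar> *
      (\<integral>\<^sup>+x. ennreal (std_normal_density (0 + -1 * x)) * indicator {..a} (0 + -1 * x) \<partial>lborel)"
    by (rule nn_integral_real_affine) auto
  also have "\<dots> = (\<integral>\<^sup>+x. ennreal (std_normal_density x) * indicator {-a..} x \<partial>lborel)"
    by (simp add: std_normal_density_def indicator_def) (rule nn_integral_cong, auto)
  also have "\<dots> = emeasure std_normal {-a..}"
    by (simp add: emeasure_density)
  finally show ?thesis .
qed

lemma measure_std_normal_greaterThanAtMost_pos:
  assumes "x < y"
  shows "0 < measure std_normal {x<..y}"
proof -
  interpret real_distribution std_normal
    by (rule real_distribution_std_normal)
  have "emeasure std_normal {x<..y} \<noteq> 0"
  proof
    assume "emeasure std_normal {x<..y} = 0"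
    then have "(\<integral>\<^sup>+z. ennreal (std_normal_density z) * indicator {x<..y} z \<partial>lborel) = 0"
      by (simp add: emeasure_density)
    then have "AE z in lborel. ennreal (std_normal_density z) * indicator {x<..y} z = 0"
      by (subst (asm) nn_integral_0_iff_AE) auto
    then have "AE z in lborel. z \<notin> {x<..y}"
      by eventually_elim (auto simp: std_normal_density_def indicator_def)
    then have "emeasure lborel {x<..y} = 0"
      by (subst AE_iff_measurable[symmetric, where P="\<lambda>z. z \<notin> {x<..y}"]) auto
    with assms show False by simp
  qed
  then show ?thesis
    by (simp add: emeasure_eq_measure zero_less_measure_iff)
qed

lemma Phi_strict_mono: "strict_mono Phi"
proof
  fix x y :: real
  assume "x < y"
  interpret real_distribution std_normal
    by (rule real_distribution_std_normal)
  show "Phi x < Phi y"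
    using cdf_diff_eq[OF \<open>x < y\<close>] measure_std_normal_greaterThanAtMost_pos[OF \<open>x < y\<close>]
    by (simp add: Phi_eq_cdf)
qed

lemma Phi_pos: "0 < Phi x"
proof -
  interpret real_distribution std_normal
    by (rule real_distribution_std_normal)
  have "0 \<le> Phi (x - 1)"
    by (simp add: Phi_eq_cdf cdf_nonneg)
  also have "\<dots> < Phi x"
    using Phi_strict_mono by (simp add: strict_mono_less)
  finally show ?thesis .
qed

lemma Phi_less_half:
  assumes "x < 0"
  shows "Phi x < 1 / 2"
proof -
  interpret real_distribution std_normal
    by (rule real_distribution_std_normal)
  have "Phi x = measure std_normal {-x..}"
    using emeasure_std_normal_atMost_eq_atLeast[of x] by (simp add: Phi_def measure_def)
  also have "\<dots> \<le> measure std_normal {0<..}"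
    using assms by (intro finite_measure_mono) auto
  also have "\<dots> = 1 - Phi 0"
    using prob_compl[of "{..0}"] by (simp add: Phi_def Compl_eq_Diff_UNIV[symmetric])
  also have "\<dots> < 1 - Phi x"
    using Phi_strict_mono assms by (simp add: strict_mono_less)
  finally show ?thesis by simp
qed

lemma Phi_inv_Phi: "Phi_inv (Phi x) = x"
  unfolding Phi_inv_def
  using strict_mono_eq[OF Phi_strict_mono] by simp

definition id_mat :: "nat \<Rightarrow> nat \<Rightarrow> real" where
  "id_mat i j = (if i = j then 1 else 0)"

lemma mat_psd_id_mat: "mat_psd d id_mat"
proof -
  have "(\<Sum>i<d. \<Sum>j<d. x i * id_mat i j * x j) = (\<Sum>i<d. (x i)\<^sup>2)" for x :: "nat \<Rightarrow> real"
    by (simp add: id_mat_def power2_eq_square if_distrib[of "\<lambda>t. _ * t"]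
        if_distrib[of "\<lambda>t. t * _"] cong: if_cong)
  then show ?thesis
    by (simp add: mat_psd_def mat_symmetric_def id_mat_def sum_nonneg)
qed

lemma is_psd_sqrt_id_mat: "is_psd_sqrt d id_mat id_mat"
  by (simp add: is_psd_sqrt_def mat_psd_id_mat id_mat_def if_distrib[of "\<lambda>t. t * _"] cong: if_cong)

lemma mat_vec_id_mat: "i < d \<Longrightarrow> mat_vec d id_mat x i = x i"
  by (simp add: mat_vec_def id_mat_def if_distrib[of "\<lambda>t. t * _"] cong: if_cong)

lemma abs_plus_abs_le_sqrt2_norm: "\<bar>a\<bar> + \<bar>b\<bar> \<le> sqrt 2 * sqrt (a\<^sup>2 + b\<^sup>2)"
proof (rule power2_le_imp_le)
  have "0 \<le> (\<bar>a\<bar> - \<bar>b\<bar>)\<^sup>2"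
    by simp
  then show "(\<bar>a\<bar> + \<bar>b\<bar>)\<^sup>2 \<le> (sqrt 2 * sqrt (a\<^sup>2 + b\<^sup>2))\<^sup>2"
    by (simp add: power_mult_distrib power2_eq_square algebra_simps)
qed simp

abbreviation example_feasible :: "real \<Rightarrow> (nat \<Rightarrow> real) \<Rightarrow> bool" where
  "example_feasible alpha \<equiv> feasible 2 (\<lambda>_. 1) id_mat alpha (Phi (-1))"

lemma example_feasible_iff:
  "example_feasible alpha e \<longleftrightarrow> alpha \<le> e 0 + e 1 - sqrt ((e 0)\<^sup>2 + (e 1)\<^sup>2)"
  by (simp add: feasible_def Phi_inv_Phi dot_def norm2_def mat_vec_id_mat numeral_2_eq_2)
    (simp add: algebra_simps)

lemma example_feasible_nonzero:
  assumes "example_feasible alpha e" "0 < alpha"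
  shows "e 0 \<noteq> 0" "e 1 \<noteq> 0"
  using assms by (auto simp: example_feasible_iff)

lemma example_cost_lower_bound:
  assumes "example_feasible alpha e"
  shows "(2 + sqrt 2) * alpha \<le> cost 2 (\<lambda>_. 1) e"
proof -
  define L where "L = \<bar>e 0\<bar> + \<bar>e 1\<bar>"
  have cost_eq: "cost 2 (\<lambda>_. 1) e = L"
    by (simp add: cost_def L_def numeral_2_eq_2)
  have "alpha \<le> L - sqrt ((e 0)\<^sup>2 + (e 1)\<^sup>2)"
    using assms unfolding example_feasible_iff L_def by linarith
  also have "\<dots> \<le> L - L / sqrt 2"
    using abs_plus_abs_le_sqrt2_norm[of "e 0" "e 1"]
    by (simp add: L_def divide_le_eq mult.commute)
  finally have "alpha \<le> L * (1 - 1 / sqrt 2)"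
    by (simp add: algebra_simps)
  then have "(2 + sqrt 2) * alpha \<le> (2 + sqrt 2) * (1 - 1 / sqrt 2) * L"
    by (metis mult.assoc mult.commute mult_left_mono add_nonneg_nonneg real_sqrt_ge_zero
        zero_le_numeral)
  also have "(2 + sqrt 2) * (1 - 1 / sqrt 2) = 1"
    by (simp add: field_simps)
  finally show ?thesis
    by (simp add: cost_eq)
qed

lemma example_optimal_diagonal:
  assumes "0 \<le> alpha"
  shows "optimal 2 (\<lambda>_. 1) id_mat (\<lambda>_. 1) alpha (Phi (-1)) (\<lambda>_. (1 + sqrt 2 / 2) * alpha)"
proof -
  define s where "s = (1 + sqrt 2 / 2) * alpha"
  have "0 \<le> s"
    using assms by (simp add: s_def)
  then have "sqrt (s\<^sup>2 + s\<^sup>2) = sqrt 2 * s"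
    by (simp add: real_sqrt_mult power2_eq_square)
  then have "example_feasible alpha (\<lambda>_. s)"
    unfolding example_feasible_iff by (simp add: s_def algebra_simps)
  moreover have "cost 2 (\<lambda>_. 1) (\<lambda>_. s) = (2 + sqrt 2) * alpha"
    using \<open>0 \<le> s\<close> by (simp add: cost_def numeral_2_eq_2 s_def algebra_simps)
  ultimately show ?thesis
    using example_cost_lower_bound by (simp add: optimal_def s_def)
qed

theorem lemma6:
  shows "\<exists>(d::nat) (mu::nat \<Rightarrow> real) (Sig::nat \<Rightarrow> nat \<Rightarrow> real) (S::nat \<Rightarrow> nat \<Rightarrow> real)
           (c::nat \<Rightarrow> real) (alpha::real) (delta::real).
     d \<ge> 1 \<and> mat_psd d Sig \<and> is_psd_sqrt d S Sig \<and>
     (\<forall>f<d. c f > 0) \<and> alpha > 0 \<and> 0 < delta \<and> delta < 1/2 \<and>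
     (\<exists>e. optimal d mu S c alpha delta e) \<and>
     (\<forall>e. optimal d mu S c alpha delta e \<longrightarrow> card {f. f < d \<and> e f \<noteq> 0} \<ge> 2)"
proof -
  have support_two: "card {f. f < 2 \<and> e f \<noteq> 0} \<ge> 2"
    if "optimal 2 (\<lambda>_. 1) id_mat (\<lambda>_. 1) 1 (Phi (-1)) e" for e
  proof -
    have "e 0 \<noteq> 0" "e 1 \<noteq> 0"
      using that example_feasible_nonzero[of 1 e] by (simp_all add: optimal_def)
    then have "{f. f < 2 \<and> e f \<noteq> 0} = {0, 1}"
      by auto
    then show ?thesis
      by simp
  qed
  show ?thesis
    using mat_psd_id_mat is_psd_sqrt_id_mat Phi_pos Phi_less_half[of "-1"]
      example_optimal_diagonal[of 1] support_two
    by (intro exI[of _ 2] exI[of _ "\<lambda>_. 1"] exI[of _ id_mat] exI[of _ id_mat]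
        exI[of _ "\<lambda>_. 1"] exI[of _ 1] exI[of _ "Phi (-1)"]) auto
qed

end
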